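(* With the notation of the context, there is a surjective quandle homomorphism $\tilde R_{2n+1} \to R_{2n+1}$.
   Context: A quandle is a set $X$ with a binary operation $\triangleleft$ such that (I) $a \triangleleft a = a$; (II) for all $a,b$ there is a unique $c$ with $a = c\triangleleft b$; (III) $(a\triangleleft b)\triangleleft c = (a\triangleleft c)\triangleleft(b \triangleleft c)$; a quandle homomorphism $f$ satisfies $f(a\triangleleft b)=f(a)\triangleleft f(b)$. Fix $n\ge1$, $m=2n+1$. For a permutation $\sigma$ of $\{1,\dots,m\}$ and signs $\epsilon_i\in\{\pm1\}$, write $(\epsilon_1\sigma(1),\dots,\epsilon_m\sigma(m))$ for the $m\times m$ signed permutation matrix whose $i$-th column is $\epsilon_i e_{\sigma(i)}$, $e_j$ the standard basis column vectors. Let $a = (1, 2n+1, 2n, \ldots, n+2, -(n+1), \ldots, -3, -2)$ (column $1$ is $e_1$, column $i$ is $e_{2n+3-i}$ for $2\le i\le n+1$, column $i$ is $-e_{2n+3-i}$ for $n+2\le i\le 2n+1$) and $b = (2n+1, 1, 2, \ldots, 2n)$ (column $1$ is $e_{2n+1}$, column $i$ is $e_{i-1}$ for $i\ge2$). Let $G_{2n+1}$ be the matrix group generated by $a$ and $b$, let $H = C(a) = \{c\in G_{2n+1} : ac = ca\}$, and let $\tilde R_{2n+1}$ be the set of right cosets $Hu$ ($u\in G_{2n+1}$) with quandle operation $Hu \triangleleft Hv = H\,uv^{-1}av$. $R_{2n+1}$ is the dihedral quandle on $\{0,1,\dots,2n\}$ with $i\triangleleft j \equiv 2j - i \pmod{2n+1}$.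 *)

theory Defs
  imports "Jordan_Normal_Form.Matrix"
begin

text \<open>Matrices are m x m integer matrices, m = 2n+1. Entries are described with
  1-based indices (row r, column c) as in the paper and shifted to the 0-based
  indexing of Jordan_Normal_Form.\<close>

definition msize :: "nat \<Rightarrow> nat" where
  "msize n = 2 * n + 1"

definition signed_perm_mat :: "nat \<Rightarrow> (nat \<Rightarrow> nat) \<Rightarrow> (nat \<Rightarrow> int) \<Rightarrow> int mat" where
  "signed_perm_mat m \<sigma> \<epsilon> = mat m m (\<lambda>(i, j). if i + 1 = \<sigma> (j + 1) then \<epsilon> (j + 1) else 0)"

text \<open>a = (1, 2n+1, 2n, ..., n+2, -(n+1), ..., -3, -2).\<close>
definition mat_a :: "nat \<Rightarrow> int mat" where
  "mat_a n = signed_perm_mat (2 * n + 1)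
     (\<lambda>c. if c = 1 then 1 else 2 * n + 3 - c)
     (\<lambda>c. if c \<le> n + 1 then 1 else -1)"

definition mat_b :: "nat \<Rightarrow> int mat" where
  "mat_b n = signed_perm_mat (2 * n + 1)
     (\<lambda>c. if c = 1 then 2 * n + 1 else c - 1)
     (\<lambda>c. 1)"

inductive_set Ggen :: "nat \<Rightarrow> int mat set" for n :: nat where
  gen_one: "1\<^sub>m (2 * n + 1) \<in> Ggen n"
| gen_a: "mat_a n \<in> Ggen n"
| gen_b: "mat_b n \<in> Ggen n"
| gen_mult: "x \<in> Ggen n \<Longrightarrow> y \<in> Ggen n \<Longrightarrow> x * y \<in> Ggen n"
| gen_inv: "x \<in> Ggen n \<Longrightarrow> y \<in> carrier_mat (2 * n + 1) (2 * n + 1) \<Longrightarrow>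
            x * y = 1\<^sub>m (2 * n + 1) \<Longrightarrow> y * x = 1\<^sub>m (2 * n + 1) \<Longrightarrow> y \<in> Ggen n"

definition Hcent :: "nat \<Rightarrow> int mat set" where
  "Hcent n = {c \<in> Ggen n. mat_a n * c = c * mat_a n}"

definition rcoset :: "nat \<Rightarrow> int mat \<Rightarrow> int mat set" where
  "rcoset n u = {h * u | h. h \<in> Hcent n}"

definition Rtilde :: "nat \<Rightarrow> int mat set set" where
  "Rtilde n = rcoset n ` Ggen n"

definition dihedral_op :: "nat \<Rightarrow> int \<Rightarrow> int \<Rightarrow> int" where
  "dihedral_op n i j = (2 * j - i) mod int (2 * n + 1)"

definition R_dihedral :: "nat \<Rightarrow> int set" where
  "R_dihedral n = {0 .. int (2 * n)}"

end

theory Submission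
  imports Defs
begin

(* Put m = 2n+1.  Every element of G = <a, b> is the signed permutation matrix of an
   affine map x |-> s*x + c of Z/m with s = 1 or s = -1, carrying arbitrary column signs: a belongs
   to x |-> -x and b to x |-> x - 1, and such "affine signed permutation matrices" are closed under
   products and inverses.  For such a matrix M let pivot M be the column of the nonzero entry in
   row 0, i.e. the point that the underlying affine map sends to 0.  The key identity is
     pivot (A * B) = s_B * pivot A + pivot B   (mod m),   s_B the linear part of B.
   It yields: (1) matrices commuting with a have pivot 0 (here m odd is used), hence pivot is
   constant on the right cosets H u and induces a map on the coset quandle; (2) for w = v^-1,
   pivot (u w a v) = 2 pivot v - pivot u (mod m), the dihedral quandle operation; (3) pivot b^k = k,
   so the induced map is onto {0..2n}. *)

lemma abs_one_square: "\<bar>s\<bar> = 1 \<Longrightarrow> s * s = (1 :: int)"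
  using abs_mult_self[of s] by simp

lemma mod_mult_add_left_eq: "(a * (x mod m) + y) mod m = (a * x + y) mod (m :: int)"
  by (metis mod_add_left_eq mod_mult_right_eq)

lemma unit_affine_mod_eq_0_iff:
  fixes s x c m :: int
  assumes "s * s = 1"
  shows "(s * x + c) mod m = 0 \<longleftrightarrow> x mod m = (- s * c) mod m"
proof -
  have "(s * x + c) mod m = 0 \<longleftrightarrow> m dvd s * x + c"
    by (simp add: dvd_eq_mod_eq_0)
  also have "\<dots> \<longleftrightarrow> m dvd s * (s * x + c)"
  proof
    assume "m dvd s * (s * x + c)"
    then have "m dvd s * (s * (s * x + c))"
      by simp
    then show "m dvd s * x + c"
      using assms by (simp add: mult.assoc[symmetric])
  qed simp
  also have "s * (s * x + c) = x - (- s * c)"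
    using assms by (simp add: distrib_left mult.assoc[symmetric])
  also have "m dvd x - (- s * c) \<longleftrightarrow> x mod m = (- s * c) mod m"
    by (simp add: mod_eq_dvd_iff)
  finally show ?thesis .
qed

lemma inverse_mat_unique:
  fixes A B C :: "'a :: semiring_1 mat"
  assumes "A \<in> carrier_mat m m" "B \<in> carrier_mat m m" "C \<in> carrier_mat m m"
    and "A * B = 1\<^sub>m m" and "C * A = 1\<^sub>m m"
  shows "C = B"
proof -
  have "C = C * (A * B)"
    using assms(4) right_mult_one_mat[OF assms(3)] by simp
  also have "\<dots> = (C * A) * B"
    by (rule assoc_mult_mat[OF assms(3,1,2), symmetric])
  also have "\<dots> = B"
    using assms(5) left_mult_one_mat[OF assms(2)] by simp
  finally show ?thesis .
qed

definition affine_mat :: "nat \<Rightarrow> int \<Rightarrow> int \<Rightarrow> (nat \<Rightarrow> int) \<Rightarrow> int mat" where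
  "affine_mat m s c e =
     mat m m (\<lambda>(i, j). if int i = (s * int j + c) mod int m then e j else 0)"

lemma affine_mat_dims [simp]:
  "affine_mat m s c e \<in> carrier_mat m m"
  "dim_row (affine_mat m s c e) = m"
  "dim_col (affine_mat m s c e) = m"
  by (auto simp: affine_mat_def)

lemma affine_mat_index:
  "i < m \<Longrightarrow> j < m \<Longrightarrow>
   affine_mat m s c e $$ (i, j) = (if int i = (s * int j + c) mod int m then e j else 0)"
  by (simp add: affine_mat_def)

lemma affine_mat_mult:
  assumes "0 < m"
  shows "affine_mat m s1 c1 e1 * affine_mat m s2 c2 e2 =
         affine_mat m (s1 * s2) (s1 * c2 + c1)
           (\<lambda>k. e1 (nat ((s2 * int k + c2) mod int m)) * e2 k)"
    (is "?A * ?B = ?C")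
proof (rule eq_matI)
  fix i k assume "i < dim_row ?C" "k < dim_col ?C"
  then have i: "i < m" and k: "k < m" by auto
  define j0 where "j0 = nat ((s2 * int k + c2) mod int m)"
  have j0: "j0 < m" and int_j0: "int j0 = (s2 * int k + c2) mod int m"
    using assms by (auto simp: j0_def nat_less_iff)
  have column_k: "?B $$ (j, k) = (if j = j0 then e2 k else 0)" if "j < m" for j
    using that k int_j0 by (auto simp: affine_mat_index)
  have "(?A * ?B) $$ (i, k) = (\<Sum>j<m. ?A $$ (i, j) * ?B $$ (j, k))"
    using i k by (simp add: scalar_prod_def lessThan_atLeast0)
  also have "\<dots> = (\<Sum>j<m. if j = j0 then ?A $$ (i, j) * e2 k else 0)"
    by (rule sum.cong) (simp_all add: column_k)
  also have "\<dots> = ?A $$ (i, j0) * e2 k"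
    using j0 by simp
  also have "(s1 * int j0 + c1) mod int m = (s1 * s2 * int k + (s1 * c2 + c1)) mod int m"
  proof -
    have "(s1 * int j0 + c1) mod int m = (s1 * (s2 * int k + c2) + c1) mod int m"
      unfolding int_j0 by (rule mod_add_cong[OF mod_mult_right_eq refl])
    then show ?thesis by (simp add: algebra_simps)
  qed
  then have "?A $$ (i, j0) * e2 k = ?C $$ (i, k)"
    using i k j0 by (simp add: affine_mat_index j0_def)
  finally show "(?A * ?B) $$ (i, k) = ?C $$ (i, k)" .
qed auto

lemma affine_mat_one:
  assumes "\<And>k. k < m \<Longrightarrow> e k = 1" and "c mod int m = 0"
  shows "affine_mat m 1 c e = 1\<^sub>m m"
proof (rule eq_matI)
  fix i j assume "i < dim_row (1\<^sub>m m :: int mat)" "j < dim_col (1\<^sub>m m :: int mat)"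
  then have i: "i < m" and j: "j < m" by auto
  have "(int j + c) mod int m = int j mod int m"
    using assms(2) by (metis add.right_neutral mod_add_right_eq)
  also have "\<dots> = int j"
    using j by simp
  finally show "affine_mat m 1 c e $$ (i, j) = 1\<^sub>m m $$ (i, j)"
    using i j assms(1) by (auto simp: affine_mat_index)
qed auto

lemma affine_mat_right_inverse:
  assumes "0 < m" "\<bar>s\<bar> = 1" "\<forall>j. \<bar>e j\<bar> = 1"
  shows "affine_mat m s c e * affine_mat m s (- s * c) (\<lambda>j. e (nat ((s * int j - s * c) mod int m)))
         = 1\<^sub>m m"
proof -
  have ss: "s * s = 1"
    using assms(2) by (rule abs_one_square)
  have ee: "e j * e j = 1" for j
    using assms(3) by (simp add: abs_one_square)
  have cc: "s * (- s * c) + c = 0"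
    using ss by (simp add: algebra_simps)
  show ?thesis
    unfolding affine_mat_mult[OF assms(1)] ss cc
    by (rule affine_mat_one) (simp_all add: ee)
qed

lemma affine_mat_left_inverse:
  assumes "0 < m" "\<bar>s\<bar> = 1" "\<forall>j. \<bar>e j\<bar> = 1"
    and "Y \<in> carrier_mat m m" "Y * affine_mat m s c e = 1\<^sub>m m"
  obtains e' where "\<forall>j. \<bar>e' j\<bar> = 1" "Y = affine_mat m s (- s * c) e'"
proof
  show "\<forall>j. \<bar>e (nat ((s * int j - s * c) mod int m))\<bar> = 1"
    using assms(3) by simp
  show "Y = affine_mat m s (- s * c) (\<lambda>j. e (nat ((s * int j - s * c) mod int m)))"
    by (rule inverse_mat_unique[OF _ _ assms(4) affine_mat_right_inverse[OF assms(1-3)] assms(5)])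
      simp_all
qed

definition affine_perm :: "nat \<Rightarrow> int mat \<Rightarrow> bool" where
  "affine_perm m M \<longleftrightarrow>
     (\<exists>s c e. \<bar>s\<bar> = 1 \<and> (\<forall>j. \<bar>e j\<bar> = 1) \<and> M = affine_mat m s c e)"

lemma affine_permI:
  "\<bar>s\<bar> = 1 \<Longrightarrow> \<forall>j. \<bar>e j\<bar> = 1 \<Longrightarrow> affine_perm m (affine_mat m s c e)"
  unfolding affine_perm_def by blast

lemma affine_permE:
  assumes "affine_perm m M"
  obtains s c e where "\<bar>s\<bar> = 1" "\<forall>j. \<bar>e j\<bar> = 1" "M = affine_mat m s c e"
  using assms unfolding affine_perm_def by blast

lemma affine_perm_carrier: "affine_perm m M \<Longrightarrow> M \<in> carrier_mat m m"
  by (auto elim: affine_permE)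

lemma affine_perm_mult:
  assumes "0 < m" "affine_perm m A" "affine_perm m B"
  shows "affine_perm m (A * B)"
proof -
  obtain s1 c1 e1 where "\<bar>s1\<bar> = 1" "\<forall>j. \<bar>e1 j\<bar> = 1" "A = affine_mat m s1 c1 e1"
    using assms(2) by (rule affine_permE)
  moreover obtain s2 c2 e2 where "\<bar>s2\<bar> = 1" "\<forall>j. \<bar>e2 j\<bar> = 1" "B = affine_mat m s2 c2 e2"
    using assms(3) by (rule affine_permE)
  ultimately show ?thesis
    by (simp add: affine_mat_mult[OF assms(1)] affine_permI abs_mult)
qed

definition pivot :: "nat \<Rightarrow> int mat \<Rightarrow> int" where
  "pivot m M = int (THE j. j < m \<and> M $$ (0, j) \<noteq> 0)"

lemma pivot_affine_mat:
  assumes "0 < m" "\<bar>s\<bar> = 1" "\<forall>j. \<bar>e j\<bar> = 1"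
  shows "pivot m (affine_mat m s c e) = (- s * c) mod int m"
proof -
  define p where "p = nat ((- s * c) mod int m)"
  have p: "p < m" "int p = (- s * c) mod int m"
    using assms(1) by (auto simp: p_def nat_less_iff)
  have ss: "s * s = 1"
    using assms(2) by (rule abs_one_square)
  have row_0: "affine_mat m s c e $$ (0, j) \<noteq> 0 \<longleftrightarrow> j = p" if j: "j < m" for j
  proof -
    have "e j \<noteq> 0"
      using assms(3) by (metis abs_0 zero_neq_one)
    then have "affine_mat m s c e $$ (0, j) \<noteq> 0 \<longleftrightarrow> (s * int j + c) mod int m = 0"
      using j by (auto simp: affine_mat_index)
    also have "\<dots> \<longleftrightarrow> int j mod int m = (- s * c) mod int m"
      by (rule unit_affine_mod_eq_0_iff[OF ss])
    also have "\<dots> \<longleftrightarrow> j = p"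
      using j p by auto
    finally show ?thesis .
  qed
  have "(THE j. j < m \<and> affine_mat m s c e $$ (0, j) \<noteq> 0) = p"
    using row_0 p(1) by (intro the_equality) auto
  then show ?thesis
    by (simp add: pivot_def p(2))
qed

lemma pivot_range:
  assumes "0 < m" "affine_perm m M"
  shows "0 \<le> pivot m M" "pivot m M < int m"
proof -
  obtain s c e where "\<bar>s\<bar> = 1" "\<forall>j. \<bar>e j\<bar> = 1" "M = affine_mat m s c e"
    using assms(2) by (rule affine_permE)
  then show "0 \<le> pivot m M" "pivot m M < int m"
    using assms(1) by (simp_all add: pivot_affine_mat)
qed

(* The key identity: the pivot is a crossed homomorphism into Z/m. *)
lemma pivot_mult:
  assumes "0 < m" "affine_perm m A" "B = affine_mat m s c e" "\<bar>s\<bar> = 1" "\<forall>j. \<bar>e j\<bar> = 1"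
  shows "pivot m (A * B) = (s * pivot m A + pivot m B) mod int m"
proof -
  obtain s1 c1 e1 where s1: "\<bar>s1\<bar> = 1" and e1: "\<forall>j. \<bar>e1 j\<bar> = 1"
    and A: "A = affine_mat m s1 c1 e1"
    using assms(2) by (rule affine_permE)
  have s1s1: "s1 * s1 = 1"
    using s1 by (rule abs_one_square)
  have pivot_A: "pivot m A = (- s1 * c1) mod int m"
    unfolding A using assms(1) s1 e1 by (rule pivot_affine_mat)
  have pivot_B: "pivot m B = (- s * c) mod int m"
    unfolding assms(3) using assms(1,4,5) by (rule pivot_affine_mat)
  have "pivot m (A * B) = (- (s1 * s) * (s1 * c + c1)) mod int m"
    unfolding A assms(3) affine_mat_mult[OF assms(1)]
    by (rule pivot_affine_mat) (simp_all add: assms s1 e1 abs_mult)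
  also have "- (s1 * s) * (s1 * c + c1) = s * (- s1 * c1) + (- s * c)"
  proof -
    have "- (s1 * s) * (s1 * c + c1) = (s1 * s1) * (- s * c) + s * (- s1 * c1)"
      by (simp add: algebra_simps)
    then show ?thesis
      using s1s1 by simp
  qed
  also have "(s * (- s1 * c1) + (- s * c)) mod int m =
             (s * ((- s1 * c1) mod int m) + (- s * c) mod int m) mod int m"
    by (rule mod_add_cong[OF mod_mult_right_eq mod_mod_trivial, symmetric])
  also have "\<dots> = (s * pivot m A + pivot m B) mod int m"
    unfolding pivot_A pivot_B ..
  finally show ?thesis .
qed

lemma mat_a_affine: "mat_a n = affine_mat (2 * n + 1) (- 1) 0 (\<lambda>j. if j \<le> n then 1 else - 1)"
  (is "_ = ?A")
proof (rule eq_matI)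
  fix i j assume "i < dim_row ?A" "j < dim_col ?A"
  then have i: "i < 2 * n + 1" and j: "j < 2 * n + 1" by auto
  have "(i + 1 = (if j + 1 = 1 then 1 else 2 * n + 3 - (j + 1))) \<longleftrightarrow>
        int i = (- 1 * int j + 0) mod int (2 * n + 1)"
    using i j by (cases "j = 0") (auto simp: zmod_zminus1_eq_if)
  then show "mat_a n $$ (i, j) = ?A $$ (i, j)"
    using i j by (simp add: affine_mat_index mat_a_def signed_perm_mat_def)
qed (auto simp: mat_a_def signed_perm_mat_def)

lemma mat_b_affine: "mat_b n = affine_mat (2 * n + 1) 1 (- 1) (\<lambda>_. 1)"
  (is "_ = ?B")
proof (rule eq_matI)
  fix i j assume "i < dim_row ?B" "j < dim_col ?B"
  then have i: "i < 2 * n + 1" and j: "j < 2 * n + 1" by auto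
  have "(i + 1 = (if j + 1 = 1 then 2 * n + 1 else j + 1 - 1)) \<longleftrightarrow>
        int i = (1 * int j + - 1) mod int (2 * n + 1)"
    using i j by (cases "j = 0"; cases "n = 0") (auto simp: zmod_zminus1_eq_if)
  then show "mat_b n $$ (i, j) = ?B $$ (i, j)"
    using i j by (simp add: affine_mat_index mat_b_def signed_perm_mat_def)
qed (auto simp: mat_b_def signed_perm_mat_def)

lemma Ggen_affine_perm: "M \<in> Ggen n \<Longrightarrow> affine_perm (2 * n + 1) M"
proof (induction rule: Ggen.induct)
  case gen_one
  have "1\<^sub>m (2 * n + 1) = affine_mat (2 * n + 1) 1 0 (\<lambda>_. 1)"
    by (simp add: affine_mat_one)
  then show ?case
    by (simp add: affine_permI)
next
  case gen_a
  show ?case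
    unfolding mat_a_affine by (rule affine_permI) simp_all
next
  case gen_b
  show ?case
    unfolding mat_b_affine by (rule affine_permI) simp_all
next
  case (gen_mult x y)
  then show ?case
    by (simp add: affine_perm_mult)
next
  case (gen_inv x y)
  obtain s c e where s: "\<bar>s\<bar> = 1" and e: "\<forall>j. \<bar>e j\<bar> = 1"
    and x: "x = affine_mat (2 * n + 1) s c e"
    using gen_inv.IH by (rule affine_permE)
  have yx: "y * affine_mat (2 * n + 1) s c e = 1\<^sub>m (2 * n + 1)"
    using gen_inv.hyps(4) x by simp
  obtain e' where "\<forall>j. \<bar>e' j\<bar> = 1" "y = affine_mat (2 * n + 1) s (- s * c) e'"
    by (rule affine_mat_left_inverse[OF _ s e gen_inv.hyps(2) yx]) simp
  with s show ?case
    by (simp add: affine_permI)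
qed

lemma mat_b_pow_Ggen: "mat_b n ^\<^sub>m k \<in> Ggen n"
proof (induction k)
  case 0
  have "dim_row (mat_b n) = 2 * n + 1"
    by (simp add: mat_b_def signed_perm_mat_def)
  then show ?case
    using Ggen.gen_one[of n] by simp
next
  case (Suc k)
  then show ?case
    by (simp add: Ggen.gen_mult Ggen.gen_b)
qed

(* a fixes 0, so its pivot is 0. *)
lemma pivot_mat_a: "pivot (2 * n + 1) (mat_a n) = 0"
  unfolding mat_a_affine by (subst pivot_affine_mat) auto

lemma pivot_mat_b_pow: "pivot (2 * n + 1) (mat_b n ^\<^sub>m k) = int k mod int (2 * n + 1)"
proof (induction k)
  case 0
  have "mat_b n ^\<^sub>m 0 = affine_mat (2 * n + 1) 1 0 (\<lambda>_. 1)"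
    by (simp add: mat_b_affine affine_mat_one)
  then show ?case
    by (simp add: pivot_affine_mat)
next
  case (Suc k)
  let ?m = "2 * n + 1"
  have "pivot ?m (mat_b n ^\<^sub>m Suc k) =
        (1 * pivot ?m (mat_b n ^\<^sub>m k) + pivot ?m (mat_b n)) mod int ?m"
    unfolding pow_mat.simps(2)
    by (rule pivot_mult[OF _ Ggen_affine_perm[OF mat_b_pow_Ggen] mat_b_affine]) simp_all
  also have "\<dots> = int (Suc k) mod int ?m"
    using Suc.IH by (simp add: mat_b_affine pivot_affine_mat mod_simps add.commute)
  finally show ?case .
qed

(* Matrices commuting with a have pivot 0: comparing a*h with h*a gives p = -p (mod m), and m
   is odd. *)
lemma pivot_centralizer:
  assumes "h \<in> Hcent n"
  shows "pivot (2 * n + 1) h = 0"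
proof -
  let ?m = "2 * n + 1"
  have comm: "mat_a n * h = h * mat_a n" and h: "affine_perm ?m h"
    using assms Ggen_affine_perm by (auto simp: Hcent_def)
  obtain s c e where s: "\<bar>s\<bar> = 1" and e: "\<forall>j. \<bar>e j\<bar> = 1" and h_eq: "h = affine_mat ?m s c e"
    using h by (rule affine_permE)
  have a: "affine_perm ?m (mat_a n)"
    by (rule Ggen_affine_perm[OF Ggen.gen_a])
  define p where "p = pivot ?m h"
  have p_range: "0 \<le> p" "p < int ?m"
    using pivot_range[OF _ h] by (simp_all add: p_def)
  have "p = pivot ?m (mat_a n * h)"
  proof -
    have "pivot ?m (mat_a n * h) = (s * pivot ?m (mat_a n) + p) mod int ?m"
      unfolding p_def by (rule pivot_mult[OF _ a h_eq s e]) simp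
    then show ?thesis
      using p_range pivot_mat_a by simp
  qed
  also have "\<dots> = pivot ?m (h * mat_a n)"
    by (simp add: comm)
  also have "\<dots> = (- p) mod int ?m"
  proof -
    have "pivot ?m (h * mat_a n) = (- 1 * p + pivot ?m (mat_a n)) mod int ?m"
      unfolding p_def by (rule pivot_mult[OF _ h mat_a_affine]) auto
    then show ?thesis
      using pivot_mat_a by simp
  qed
  finally have "p mod int ?m = (- p) mod int ?m"
    using p_range by simp
  then have "int ?m dvd 2 * p"
    by (simp add: mod_eq_dvd_iff)
  then have "int ?m dvd p"
    using coprime_dvd_mult_right_iff[of "int ?m" 2 p] by simp
  then have "p mod int ?m = 0"
    by simp
  then show "pivot ?m h = 0"
    using p_range unfolding p_def[symmetric] by simp
qed

lemma pivot_coset: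
  assumes "h \<in> Hcent n" "u \<in> Ggen n"
  shows "pivot (2 * n + 1) (h * u) = pivot (2 * n + 1) u"
proof -
  let ?m = "2 * n + 1"
  have h: "affine_perm ?m h" and u: "affine_perm ?m u"
    using assms Ggen_affine_perm by (auto simp: Hcent_def)
  obtain s c e where s: "\<bar>s\<bar> = 1" and e: "\<forall>j. \<bar>e j\<bar> = 1" and u_eq: "u = affine_mat ?m s c e"
    using u by (rule affine_permE)
  have "pivot ?m (h * u) = (s * pivot ?m h + pivot ?m u) mod int ?m"
    by (rule pivot_mult[OF _ h u_eq s e]) simp
  then show ?thesis
    using pivot_centralizer[OF assms(1)] pivot_range[OF _ u] by simp
qed

lemma pivot_image_Ggen: "pivot (2 * n + 1) ` Ggen n = R_dihedral n"
proof (intro equalityI subsetI)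
  fix x assume "x \<in> pivot (2 * n + 1) ` Ggen n"
  then obtain M where M: "M \<in> Ggen n" and x: "x = pivot (2 * n + 1) M"
    by blast
  show "x \<in> R_dihedral n"
    using pivot_range[OF _ Ggen_affine_perm[OF M]] by (simp add: x R_dihedral_def)
next
  fix x assume "x \<in> R_dihedral n"
  then have "0 \<le> x" "x < int (2 * n + 1)"
    by (simp_all add: R_dihedral_def)
  then have "x = pivot (2 * n + 1) (mat_b n ^\<^sub>m nat x)"
    using pivot_mat_b_pow[of n "nat x"] by simp
  then show "x \<in> pivot (2 * n + 1) ` Ggen n"
    using mat_b_pow_Ggen by blast
qed

(* The pivot turns the conjugation u v^-1 a v into the dihedral operation: writing
   w = v^-1 with linear part s, pivot w = -s * pivot v, and the key identity does the rest. *)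
lemma pivot_reflection:
  assumes u: "u \<in> Ggen n" and v: "v \<in> Ggen n" and w: "w \<in> Ggen n"
    and vw: "v * w = 1\<^sub>m (2 * n + 1)"
  shows "pivot (2 * n + 1) (u * w * mat_a n * v) =
         (2 * pivot (2 * n + 1) v - pivot (2 * n + 1) u) mod int (2 * n + 1)"
proof -
  let ?m = "2 * n + 1"
  let ?P = "pivot ?m"
  obtain s c e where s: "\<bar>s\<bar> = 1" and e: "\<forall>j. \<bar>e j\<bar> = 1" and w_eq: "w = affine_mat ?m s c e"
    using Ggen_affine_perm[OF w] by (rule affine_permE)
  obtain e' where e': "\<forall>j. \<bar>e' j\<bar> = 1" and v_eq: "v = affine_mat ?m s (- s * c) e'"
    by (rule affine_mat_left_inverse[OF _ s e affine_perm_carrier[OF Ggen_affine_perm[OF v]]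
          vw[unfolded w_eq]]) simp
  have ss: "s * s = 1"
    using s by (rule abs_one_square)
  have uw: "affine_perm ?m (u * w)"
    by (rule Ggen_affine_perm[OF Ggen.gen_mult[OF u w]])
  have uwa: "affine_perm ?m (u * w * mat_a n)"
    by (rule Ggen_affine_perm[OF Ggen.gen_mult[OF Ggen.gen_mult[OF u w] Ggen.gen_a]])
  have P_v: "?P v = c mod int ?m"
    using ss unfolding v_eq by (simp add: pivot_affine_mat s e' mult.assoc[symmetric])
  have P_w: "?P w = (- s * ?P v) mod int ?m"
  proof -
    have "?P w = (- s * c) mod int ?m"
      unfolding w_eq by (rule pivot_affine_mat[OF _ s e]) simp
    then show ?thesis
      unfolding P_v by (simp only: mod_mult_right_eq)
  qed
  have P_uw: "?P (u * w) = (s * ?P u + ?P w) mod int ?m"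
    by (rule pivot_mult[OF _ Ggen_affine_perm[OF u] w_eq s e]) simp
  have P_uwa: "?P (u * w * mat_a n) = (- 1 * ?P (u * w) + 0) mod int ?m"
    using pivot_mult[OF _ uw mat_a_affine] pivot_mat_a by simp
  have P_uwav: "?P (u * w * mat_a n * v) = (s * ?P (u * w * mat_a n) + ?P v) mod int ?m"
    by (rule pivot_mult[OF _ uwa v_eq s e']) simp
  have "?P (u * w * mat_a n * v) = ((- s) * ?P (u * w) + ?P v) mod int ?m"
    unfolding P_uwav P_uwa by (simp add: mod_mult_add_left_eq)
  also have "\<dots> = ((- s) * (s * ?P u + ?P w) + ?P v) mod int ?m"
    unfolding P_uw by (rule mod_mult_add_left_eq)
  also have "(- s) * (s * ?P u + ?P w) + ?P v = (- s) * ?P w + (?P v - ?P u)"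
    using ss by (simp add: algebra_simps)
  also have "((- s) * ?P w + (?P v - ?P u)) mod int ?m =
             ((- s) * (- s * ?P v) + (?P v - ?P u)) mod int ?m"
    unfolding P_w by (rule mod_mult_add_left_eq)
  also have "(- s) * (- s * ?P v) + (?P v - ?P u) = 2 * ?P v - ?P u"
  proof -
    have "(- s) * (- s * ?P v) = (s * s) * ?P v"
      by (simp add: algebra_simps)
    then show ?thesis
      using ss by simp
  qed
  finally show ?thesis .
qed

definition coset_pivot :: "nat \<Rightarrow> int mat set \<Rightarrow> int" where
  "coset_pivot n S = pivot (2 * n + 1) (SOME M. M \<in> S)"

lemma coset_pivot_rcoset:
  assumes "u \<in> Ggen n"
  shows "coset_pivot n (rcoset n u) = pivot (2 * n + 1) u"
proof -
  have "1\<^sub>m (2 * n + 1) \<in> Hcent n"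
    using affine_perm_carrier[OF Ggen_affine_perm[OF Ggen.gen_a[of n]]] Ggen.gen_one[of n]
    by (simp add: Hcent_def)
  moreover have "u = 1\<^sub>m (2 * n + 1) * u"
    using affine_perm_carrier[OF Ggen_affine_perm[OF assms]] by simp
  ultimately have "u \<in> rcoset n u"
    unfolding rcoset_def by blast
  then have "(SOME M. M \<in> rcoset n u) \<in> rcoset n u"
    by (rule someI)
  then obtain h where "h \<in> Hcent n" "(SOME M. M \<in> rcoset n u) = h * u"
    unfolding rcoset_def by blast
  then show ?thesis
    unfolding coset_pivot_def using pivot_coset assms by simp
qed

theorem mainTheorem5:
  fixes n :: nat
  assumes "n \<ge> 1"
  shows "\<exists>f :: int mat set \<Rightarrow> int.
           f ` Rtilde n = R_dihedral n \<and>
           (\<forall>u \<in> Ggen n. \<forall>v \<in> Ggen n. \<forall>w \<in> Ggen n.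
              v * w = 1\<^sub>m (2 * n + 1) \<longrightarrow>
              f (rcoset n (u * w * mat_a n * v)) =
                dihedral_op n (f (rcoset n u)) (f (rcoset n v)))"
proof (intro exI[of _ "coset_pivot n"] conjI ballI impI)
  have "coset_pivot n ` Rtilde n = pivot (2 * n + 1) ` Ggen n"
    unfolding Rtilde_def image_image by (rule image_cong[OF refl coset_pivot_rcoset])
  then show "coset_pivot n ` Rtilde n = R_dihedral n"
    by (simp only: pivot_image_Ggen)
next
  fix u v w assume u: "u \<in> Ggen n" and v: "v \<in> Ggen n" and w: "w \<in> Ggen n"
    and vw: "v * w = 1\<^sub>m (2 * n + 1)"
  have uwav: "u * w * mat_a n * v \<in> Ggen n"
    using u v w by (intro Ggen.gen_mult Ggen.gen_a)
  show "coset_pivot n (rcoset n (u * w * mat_a n * v)) =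
        dihedral_op n (coset_pivot n (rcoset n u)) (coset_pivot n (rcoset n v))"
    unfolding coset_pivot_rcoset[OF u] coset_pivot_rcoset[OF v] coset_pivot_rcoset[OF uwav]
      dihedral_op_def
    by (rule pivot_reflection[OF u v w vw])
qed

end
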